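(* Let $R$ be a Bezout domain satisfying the Dubrovin–Komarnytsky (D-K) condition. If $a,b\in R$ satisfy $RaR=R$ and $RbR=R$, then $RabR=R$.
   Context: All rings are associative with nonzero identity. A Bezout domain is a domain in which every finitely generated right ideal and every finitely generated left ideal is principal. For $x\in R$, $RxR$ denotes the two-sided ideal generated by $x$. A nonzero element $a$ is invariant if $aR=Ra$. $R$ satisfies the Dubrovin condition if for every $a\in R$ there is $a_*\in R$ with $RaR=a_*R=Ra_*$. A domain $R$ satisfies the Komarnytsky condition if whenever $a$ is invariant and $a=bc$ with $b,c\in R$, both $b$ and $c$ are invariant. The D-K condition means that both the Dubrovin and the Komarnytsky conditions hold. *)

theory Defs
  imports Main
begin

definition right_ideal :: "'a::ring_1 set \<Rightarrow> bool" where
  "right_ideal I \<longleftrightarrow> 0 \<in> I \<and> (\<forall>x\<in>I. \<forall>y\<in>I. x + y \<in> I) \<and> (\<forall>x\<in>I. - x \<in> I)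
     \<and> (\<forall>x\<in>I. \<forall>r. x * r \<in> I)"

definition left_ideal :: "'a::ring_1 set \<Rightarrow> bool" where
  "left_ideal I \<longleftrightarrow> 0 \<in> I \<and> (\<forall>x\<in>I. \<forall>y\<in>I. x + y \<in> I) \<and> (\<forall>x\<in>I. - x \<in> I)
     \<and> (\<forall>x\<in>I. \<forall>r. r * x \<in> I)"

definition two_sided_ideal :: "'a::ring_1 set \<Rightarrow> bool" where
  "two_sided_ideal I \<longleftrightarrow> right_ideal I \<and> left_ideal I"

definition right_ideal_gen :: "'a::ring_1 set \<Rightarrow> 'a set" where
  "right_ideal_gen S = \<Inter>{I. right_ideal I \<and> S \<subseteq> I}"

definition left_ideal_gen :: "'a::ring_1 set \<Rightarrow> 'a set" where
  "left_ideal_gen S = \<Inter>{I. left_ideal I \<and> S \<subseteq> I}"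

definition ideal_gen :: "'a::ring_1 \<Rightarrow> 'a set" where
  "ideal_gen x = \<Inter>{I. two_sided_ideal I \<and> x \<in> I}"

definition rprin :: "'a::ring_1 \<Rightarrow> 'a set" where
  "rprin a = {a * r | r. True}"

definition lprin :: "'a::ring_1 \<Rightarrow> 'a set" where
  "lprin a = {r * a | r. True}"

definition bezout_domain :: "'a::ring_1_no_zero_divisors itself \<Rightarrow> bool" where
  "bezout_domain _ \<longleftrightarrow>
     (\<forall>I::'a set. right_ideal I \<and> (\<exists>S. finite S \<and> I = right_ideal_gen S) \<longrightarrow> (\<exists>a. I = rprin a)) \<and>
     (\<forall>I::'a set. left_ideal I \<and> (\<exists>S. finite S \<and> I = left_ideal_gen S) \<longrightarrow> (\<exists>a. I = lprin a))"

definition invariant :: "'a::ring_1 \<Rightarrow> bool" where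
  "invariant a \<longleftrightarrow> a \<noteq> 0 \<and> rprin a = lprin a"

definition dubrovin :: "'a::ring_1 itself \<Rightarrow> bool" where
  "dubrovin _ \<longleftrightarrow> (\<forall>a::'a. \<exists>a'. ideal_gen a = rprin a' \<and> ideal_gen a = lprin a')"

definition komarnytsky :: "'a::ring_1 itself \<Rightarrow> bool" where
  "komarnytsky _ \<longleftrightarrow> (\<forall>a b c::'a. invariant a \<and> a = b * c \<longrightarrow> invariant b \<and> invariant c)"

definition DK_condition :: "'a::ring_1 itself \<Rightarrow> bool" where
  "DK_condition T \<longleftrightarrow> dubrovin T \<and> komarnytsky T"

end

theory Submission
  imports Defs
begin

text \<open>
  By the Dubrovin condition \<open>RabR = cR = Rc\<close> for an invariant \<open>c\<close>. In the Bezout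
  domain the left ideal \<open>Ra + Rc\<close> is principal, say \<open>Rd\<close>; then \<open>d\<close> divides \<open>c\<close>, so it is
  invariant by the Komarnytsky condition, and \<open>dR = Rd\<close> is a two-sided ideal containing
  \<open>a\<close>, hence all of \<open>RaR = R\<close>. Thus \<open>Ra + Rc = R\<close>, and symmetrically \<open>bR + cR = R\<close>.
  Multiplying \<open>1 = pa + qc\<close> by \<open>1 = bz + cw\<close> exhibits \<open>1\<close> in \<open>RabR + RcR = cR\<close>.
\<close>

lemma right_ideal_rprin: "right_ideal (rprin c)"
  unfolding right_ideal_def rprin_def
  by (auto simp: mult.assoc intro: exI[of _ 0] exI[of _ "_ + _"] exI[of _ "- _"]
      exI[of _ "_ * _"] simp flip: distrib_left)

lemma left_ideal_lprin: "left_ideal (lprin c)"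
  unfolding left_ideal_def lprin_def
  by (auto simp: mult.assoc intro: exI[of _ 0] exI[of _ "_ + _"] exI[of _ "- _"]
      exI[of _ "_ * _"] simp flip: distrib_right)

lemma self_in_rprin: "c \<in> rprin c"
  unfolding rprin_def by (auto intro: exI[of _ 1])

lemma two_sided_ideal_rprin_invariant:
  "invariant c \<Longrightarrow> two_sided_ideal (rprin c)"
  unfolding two_sided_ideal_def invariant_def
  using right_ideal_rprin left_ideal_lprin by metis

lemma right_ideal_eq_UNIV: "right_ideal I \<Longrightarrow> 1 \<in> I \<Longrightarrow> I = UNIV"
  unfolding right_ideal_def by (metis UNIV_eq_I mult_1)

lemma ideal_gen_least: "two_sided_ideal I \<Longrightarrow> x \<in> I \<Longrightarrow> ideal_gen x \<subseteq> I"
  unfolding ideal_gen_def by blast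

lemma ideal_gen_mem: "x \<in> ideal_gen x"
  unfolding ideal_gen_def by blast

lemma ideal_gen_eq_UNIV_nonzero:
  assumes "ideal_gen (x::'a::ring_1) = UNIV" shows "x \<noteq> 0"
proof
  assume "x = 0"
  have "two_sided_ideal ({0}::'a set)"
    unfolding two_sided_ideal_def right_ideal_def left_ideal_def by auto
  with \<open>x = 0\<close> have "ideal_gen x \<subseteq> {0}" by (simp add: ideal_gen_least)
  with assms have "(1::'a) = 0" by blast
  then show False by simp
qed

lemma right_ideal_gen_pair:
  fixes a c :: "'a::ring_1"
  shows "right_ideal_gen {a, c} = {a * x + c * y | x y. True}"
proof
  let ?J = "{a * x + c * y | x y. True}"
  have "right_ideal ?J"
    unfolding right_ideal_def
  proof (intro conjI ballI allI)
    show "0 \<in> ?J" by (auto intro!: exI[of _ 0])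
  next
    fix u v assume "u \<in> ?J" "v \<in> ?J"
    then obtain x y x' y' where "u = a * x + c * y" "v = a * x' + c * y'" by auto
    then have "u + v = a * (x + x') + c * (y + y')" by (simp add: algebra_simps)
    then show "u + v \<in> ?J" by blast
  next
    fix u assume "u \<in> ?J"
    then obtain x y where "u = a * x + c * y" by auto
    then have "- u = a * (- x) + c * (- y)" by simp
    then show "- u \<in> ?J" by blast
  next
    fix u r assume "u \<in> ?J"
    then obtain x y where "u = a * x + c * y" by auto
    then have "u * r = a * (x * r) + c * (y * r)" by (simp add: algebra_simps)
    then show "u * r \<in> ?J" by blast
  qed
  moreover have "a = a * 1 + c * 0" "c = a * 0 + c * 1" by simp_all
  then have "a \<in> ?J" "c \<in> ?J" by blast+
  ultimately show "right_ideal_gen {a, c} \<subseteq> ?J"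
    unfolding right_ideal_gen_def by blast
  show "?J \<subseteq> right_ideal_gen {a, c}"
    unfolding right_ideal_gen_def right_ideal_def by auto
qed

lemma left_ideal_gen_pair:
  fixes a c :: "'a::ring_1"
  shows "left_ideal_gen {a, c} = {x * a + y * c | x y. True}"
proof
  let ?J = "{x * a + y * c | x y. True}"
  have "left_ideal ?J"
    unfolding left_ideal_def
  proof (intro conjI ballI allI)
    show "0 \<in> ?J" by (auto intro!: exI[of _ 0])
  next
    fix u v assume "u \<in> ?J" "v \<in> ?J"
    then obtain x y x' y' where "u = x * a + y * c" "v = x' * a + y' * c" by auto
    then have "u + v = (x + x') * a + (y + y') * c" by (simp add: algebra_simps)
    then show "u + v \<in> ?J" by blast
  next
    fix u assume "u \<in> ?J"
    then obtain x y where "u = x * a + y * c" by auto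
    then have "- u = (- x) * a + (- y) * c" by simp
    then show "- u \<in> ?J" by blast
  next
    fix u r assume "u \<in> ?J"
    then obtain x y where "u = x * a + y * c" by auto
    then have "r * u = (r * x) * a + (r * y) * c" by (simp add: algebra_simps)
    then show "r * u \<in> ?J" by blast
  qed
  moreover have "a = 1 * a + 0 * c" "c = 0 * a + 1 * c" by simp_all
  then have "a \<in> ?J" "c \<in> ?J" by blast+
  ultimately show "left_ideal_gen {a, c} \<subseteq> ?J"
    unfolding left_ideal_gen_def by blast
  show "?J \<subseteq> left_ideal_gen {a, c}"
    unfolding left_ideal_gen_def left_ideal_def by auto
qed

lemma bezout_right_pair:
  fixes a c :: "'a::ring_1_no_zero_divisors"
  assumes "bezout_domain TYPE('a)"
  obtains d where "{a * x + c * y | x y. True} = rprin d"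
proof -
  have "right_ideal (right_ideal_gen {a, c})"
    unfolding right_ideal_def right_ideal_gen_def by auto
  with assms obtain d where "right_ideal_gen {a, c} = rprin d"
    unfolding bezout_domain_def by (metis finite.emptyI finite.insertI)
  with that show ?thesis by (simp add: right_ideal_gen_pair)
qed

lemma bezout_left_pair:
  fixes a c :: "'a::ring_1_no_zero_divisors"
  assumes "bezout_domain TYPE('a)"
  obtains d where "{x * a + y * c | x y. True} = lprin d"
proof -
  have "left_ideal (left_ideal_gen {a, c})"
    unfolding left_ideal_def left_ideal_gen_def by auto
  with assms obtain d where "left_ideal_gen {a, c} = lprin d"
    unfolding bezout_domain_def by (metis finite.emptyI finite.insertI)
  with that show ?thesis by (simp add: left_ideal_gen_pair)
qed

lemma dubrovin_generator_invariant:
  assumes "ideal_gen x = rprin c" "ideal_gen x = lprin c" "x \<noteq> 0"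
  shows "invariant c"
proof -
  from assms(1) obtain r where "x = c * r"
    using ideal_gen_mem unfolding rprin_def by blast
  with assms show ?thesis unfolding invariant_def by auto
qed

lemma left_comaximal_with_invariant:
  fixes a c :: "'a::ring_1_no_zero_divisors"
  assumes "bezout_domain TYPE('a)" "komarnytsky TYPE('a)"
    and "invariant c" "ideal_gen a = UNIV"
  obtains p q where "p * a + q * c = 1"
proof -
  obtain d where d: "{x * a + y * c | x y. True} = lprin d"
    using bezout_left_pair[OF assms(1)] .
  have "c \<in> lprin d"
    by (auto simp flip: d intro: exI[of _ 0] exI[of _ 1])
  then obtain u where "c = u * d" unfolding lprin_def by auto
  with assms(2,3) have inv_d: "invariant d" unfolding komarnytsky_def by blast
  have "a \<in> lprin d"
    by (auto simp flip: d intro: exI[of _ 0] exI[of _ 1])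
  with inv_d have "a \<in> rprin d" unfolding invariant_def by simp
  with inv_d have "ideal_gen a \<subseteq> rprin d"
    by (simp add: ideal_gen_least two_sided_ideal_rprin_invariant)
  with assms(4) inv_d have "1 \<in> lprin d" unfolding invariant_def by auto
  then show ?thesis
    using that by (auto simp flip: d)
qed

lemma right_comaximal_with_invariant:
  fixes b c :: "'a::ring_1_no_zero_divisors"
  assumes "bezout_domain TYPE('a)" "komarnytsky TYPE('a)"
    and "invariant c" "ideal_gen b = UNIV"
  obtains z w where "b * z + c * w = 1"
proof -
  obtain e where e: "{b * x + c * y | x y. True} = rprin e"
    using bezout_right_pair[OF assms(1)] .
  have "c \<in> rprin e"
    by (auto simp flip: e intro: exI[of _ 0] exI[of _ 1])
  then obtain v where "c = e * v" unfolding rprin_def by auto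
  with assms(2,3) have inv_e: "invariant e" unfolding komarnytsky_def by blast
  have "b \<in> rprin e"
    by (auto simp flip: e intro: exI[of _ 0] exI[of _ 1])
  with inv_e have "ideal_gen b \<subseteq> rprin e"
    by (simp add: ideal_gen_least two_sided_ideal_rprin_invariant)
  with assms(4) have "1 \<in> rprin e" by auto
  then show ?thesis
    using that by (auto simp flip: e)
qed

lemma comaximal_product_mem:
  assumes "two_sided_ideal I" "a * b \<in> I" "c \<in> I"
  shows "(p * a + q * c) * (b * z + c * w) \<in> I"
proof -
  have add: "\<And>x y. x \<in> I \<Longrightarrow> y \<in> I \<Longrightarrow> x + y \<in> I"
    and mult_left: "\<And>x r. x \<in> I \<Longrightarrow> r * x \<in> I"
    and mult_right: "\<And>x r. x \<in> I \<Longrightarrow> x * r \<in> I"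
    using assms(1) unfolding two_sided_ideal_def right_ideal_def left_ideal_def by blast+
  have "(p * a + q * c) * (b * z + c * w) = p * (a * b) * z + (p * a) * c * w + q * c * (b * z + c * w)"
    by (simp add: algebra_simps)
  also have "\<dots> \<in> I"
    using mult_right[OF mult_left[OF assms(2)]] mult_right[OF mult_left[OF assms(3)]]
    by (intro add)
  finally show ?thesis .
qed

theorem proposition3p4:
  fixes a b :: "'a::ring_1_no_zero_divisors"
  assumes "bezout_domain TYPE('a)"
    and "DK_condition TYPE('a)"
    and "ideal_gen a = UNIV"
    and "ideal_gen b = UNIV"
  shows "ideal_gen (a * b) = UNIV"
proof -
  have kom: "komarnytsky TYPE('a)" using assms(2) unfolding DK_condition_def by simp
  obtain c where c_r: "ideal_gen (a * b) = rprin c" and c_l: "ideal_gen (a * b) = lprin c"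
    using assms(2) unfolding DK_condition_def dubrovin_def by blast
  have "a * b \<noteq> 0"
    using assms(3,4) by (simp add: ideal_gen_eq_UNIV_nonzero)
  with c_r c_l have inv_c: "invariant c" by (rule dubrovin_generator_invariant)
  obtain p q where pq: "p * a + q * c = 1"
    using left_comaximal_with_invariant[OF assms(1) kom inv_c assms(3)] .
  obtain z w where zw: "b * z + c * w = 1"
    using right_comaximal_with_invariant[OF assms(1) kom inv_c assms(4)] .
  have "(p * a + q * c) * (b * z + c * w) \<in> rprin c"
    using inv_c c_r ideal_gen_mem self_in_rprin
    by (metis comaximal_product_mem two_sided_ideal_rprin_invariant)
  then have "rprin c = UNIV"
    using pq zw by (simp add: right_ideal_eq_UNIV right_ideal_rprin)
  with c_r show ?thesis by simp
qed

end
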